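(* Let $\mathbbm{k}$ be a field of characteristic $0$, $N \geqslant 2$, and let $f: \mathbb{N} \to \mathbb{Q}$ be any function. Suppose that for every $d \geqslant 0$, the defining ideal $I$ of a general set of $\binom{d+N}{N}$ points in $\mathbb{P}^N_{\mathbbm{k}}$ satisfies $\alpha(I^{(m)})/m \geqslant f(\alpha(I))$ for all $m \in \mathbb{N}$. Then for every $s \geqslant 1$, the defining ideal $I$ of a general set of $s$ points in $\mathbb{P}^N_{\mathbbm{k}}$ satisfies $\alpha(I^{(m)})/m \geqslant f(\alpha(I))$ for all $m \in \mathbb{N}$.
   Context: $\alpha(J)$ is the least degree of a nonzero homogeneous element of a homogeneous ideal $J$. For the ideal $I$ of points with point ideals $\mathfrak{p}_1,\dots,\mathfrak{p}_s$, $I^{(m)} = \bigcap_i \mathfrak{p}_i^m$. A property holds for a general set of $s$ points in $\mathbb{P}^N_{\mathbbm{k}}$ if there is a nonempty Zariski open subset $U$ of the parameter space of $s$ points (e.g. of $\mathbb{A}^{s(N+1)}_{\mathbbm{k}}$, with $\mathbf{a}=(a_{ij})$ giving the points $[a_{i0}:\dots:a_{iN}]$) such that the property holds for every set of points corresponding to a point of $U$. *)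

theory Defs
  imports Complex_Main "HOL-Library.Poly_Mapping"
begin

text \<open>Polynomials over 'k in the variables indexed by 'v (finitely supported
coefficient functions on monomials = finitely supported exponent vectors).\<close>
type_synonym ('v, 'k) mpoly = "('v \<Rightarrow>\<^sub>0 nat) \<Rightarrow>\<^sub>0 'k"

definition is_ideal :: "'r::comm_ring_1 set \<Rightarrow> bool" where
  "is_ideal J \<longleftrightarrow> 0 \<in> J \<and> (\<forall>x\<in>J. \<forall>y\<in>J. x + y \<in> J) \<and> (\<forall>r. \<forall>x\<in>J. r * x \<in> J)"

definition ideal_gen :: "'r::comm_ring_1 set \<Rightarrow> 'r set" where
  "ideal_gen S = \<Inter>{J. is_ideal J \<and> S \<subseteq> J}"

fun ideal_pow :: "'r::comm_ring_1 set \<Rightarrow> nat \<Rightarrow> 'r set" where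
  "ideal_pow I 0 = UNIV"
| "ideal_pow I (Suc m) = ideal_gen {x * y | x y. x \<in> I \<and> y \<in> ideal_pow I m}"

definition mvar :: "'v \<Rightarrow> ('v, 'k::comm_ring_1) mpoly" where
  "mvar j = Poly_Mapping.single (Poly_Mapping.single j 1) 1"

definition mconst :: "'k::comm_ring_1 \<Rightarrow> ('v, 'k) mpoly" where
  "mconst c = Poly_Mapping.single 0 c"

definition point_ideal :: "('v \<Rightarrow> 'k::comm_ring_1) \<Rightarrow> ('v, 'k) mpoly set" where
  "point_ideal a = ideal_gen {mconst (a i) * mvar j - mconst (a j) * mvar i | i j. True}"

definition homogeneous :: "nat \<Rightarrow> ('v, 'k::comm_ring_1) mpoly \<Rightarrow> bool" where
  "homogeneous d p \<longleftrightarrow> (\<forall>m \<in> Poly_Mapping.keys p. (\<Sum>x\<in>Poly_Mapping.keys m. Poly_Mapping.lookup m x) = d)"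

definition alpha :: "('v, 'k::comm_ring_1) mpoly set \<Rightarrow> nat" where
  "alpha J = (LEAST d. \<exists>p\<in>J. p \<noteq> 0 \<and> homogeneous d p)"

definition points_ideal :: "(nat \<Rightarrow> 'v \<Rightarrow> 'k::comm_ring_1) \<Rightarrow> nat \<Rightarrow> ('v, 'k) mpoly set" where
  "points_ideal pts s = (\<Inter>i<s. point_ideal (pts i))"

definition symbolic_power :: "(nat \<Rightarrow> 'v \<Rightarrow> 'k::comm_ring_1) \<Rightarrow> nat \<Rightarrow> nat \<Rightarrow> ('v, 'k) mpoly set" where
  "symbolic_power pts s m = (\<Inter>i<s. ideal_pow (point_ideal (pts i)) m)"

definition mvars :: "('v, 'k::comm_ring_1) mpoly \<Rightarrow> 'v set" where
  "mvars p = \<Union> (Poly_Mapping.keys ` Poly_Mapping.keys p)"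

definition peval :: "('v, 'k::comm_ring_1) mpoly \<Rightarrow> ('v \<Rightarrow> 'k) \<Rightarrow> 'k" where
  "peval p a = (\<Sum>m\<in>Poly_Mapping.keys p. Poly_Mapping.lookup p m * (\<Prod>x\<in>Poly_Mapping.keys m. a x ^ Poly_Mapping.lookup m x))"

text \<open>P holds for a general set of s points: there is a nonempty Zariski open subset U
of the parameter space A^(s(N+1)) (coordinates a i j, i < s, j a variable index),
U = complement of the common zero set of a family S of polynomials in these coordinates,
such that P holds at every parameter in U.\<close>
definition general_points :: "nat \<Rightarrow> ((nat \<Rightarrow> 'v \<Rightarrow> 'k::comm_ring_1) \<Rightarrow> bool) \<Rightarrow> bool" where
  "general_points s P \<longleftrightarrow>
     (\<exists>S :: (nat \<times> 'v, 'k) mpoly set.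
        (\<forall>h\<in>S. mvars h \<subseteq> {..<s} \<times> UNIV) \<and>
        (\<exists>a. \<exists>h\<in>S. peval h (case_prod a) \<noteq> 0) \<and>
        (\<forall>a. (\<exists>h\<in>S. peval h (case_prod a) \<noteq> 0) \<longrightarrow> P a))"

definition waldschmidt_prop :: "(nat \<Rightarrow> rat) \<Rightarrow> (nat \<Rightarrow> 'v \<Rightarrow> 'k::comm_ring_1) \<Rightarrow> nat \<Rightarrow> bool" where
  "waldschmidt_prop f pts s \<longleftrightarrow>
     (\<forall>m\<ge>1. of_nat (alpha (symbolic_power pts s m)) / of_nat m \<ge> f (alpha (points_ideal pts s)))"

end

theory Submission
  imports Defs "HOL-Library.Multiset" "HOL-Computational_Algebra.Polynomial" "Jordan_Normal_Form.Determinant"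
begin

text \<open>Let B e = (e + N) choose N be the number of monomials of degree e in N + 1 variables and
  choose d with t = B d \<le> s < B (d + 1). For general points the degree-d monomials are independent
  on the first t points (an evaluation determinant is nonzero), so no nonzero form of degree at
  most d vanishes there, while s < B (d + 1) yields a nonzero form q of degree d + 1 through all
  s points. Hence alpha(I_s) = alpha(I_t) = d + 1, and since q^m lies in I_s^(m) \<subseteq> I_t^(m),
  alpha(I_t^(m)) \<le> alpha(I_s^(m)): the bound for t points passes to s points. Genericity amounts
  to the nonvanishing of one polynomial in the coordinates: the determinant times a coordinate of
  every point, times a polynomial of the open set for t points.\<close>

section \<open>Evaluation of polynomials\<close>

definition monom_eval :: "('w \<Rightarrow>\<^sub>0 nat) \<Rightarrow> ('w \<Rightarrow> 'k::comm_ring_1) \<Rightarrow> 'k" where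
  "monom_eval m a = (\<Prod>x\<in>Poly_Mapping.keys m. a x ^ Poly_Mapping.lookup m x)"

lemma monom_eval_superset:
  assumes "finite K" "Poly_Mapping.keys m \<subseteq> K"
  shows "monom_eval m a = (\<Prod>x\<in>K. a x ^ Poly_Mapping.lookup m x)"
  unfolding monom_eval_def
  by (rule prod.mono_neutral_left) (use assms in \<open>auto simp: in_keys_iff\<close>)

lemma monom_eval_zero [simp]: "monom_eval 0 a = 1"
  by (simp add: monom_eval_def)

lemma monom_eval_add: "monom_eval (m + n) a = monom_eval m a * monom_eval n a"
proof -
  let ?K = "Poly_Mapping.keys m \<union> Poly_Mapping.keys n"
  have "monom_eval (m + n) a = (\<Prod>x\<in>?K. a x ^ Poly_Mapping.lookup (m + n) x)"
    by (rule monom_eval_superset) (auto simp: keys_add)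
  also have "\<dots> = (\<Prod>x\<in>?K. a x ^ Poly_Mapping.lookup m x) * (\<Prod>x\<in>?K. a x ^ Poly_Mapping.lookup n x)"
    by (simp add: lookup_add power_add prod.distrib)
  also have "\<dots> = monom_eval m a * monom_eval n a"
    by (simp add: monom_eval_superset[symmetric])
  finally show ?thesis .
qed

lemma monom_eval_single: "monom_eval (Poly_Mapping.single x e) a = a x ^ e"
  by (cases "e = 0") (auto simp: monom_eval_def)

lemma peval_eq_sum_monom_eval:
  "peval p a = (\<Sum>m\<in>Poly_Mapping.keys p. Poly_Mapping.lookup p m * monom_eval m a)"
  by (simp add: peval_def monom_eval_def)

lemma peval_superset:
  assumes "finite K" "Poly_Mapping.keys p \<subseteq> K"
  shows "peval p a = (\<Sum>m\<in>K. Poly_Mapping.lookup p m * monom_eval m a)"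
  unfolding peval_eq_sum_monom_eval
  by (rule sum.mono_neutral_left) (use assms in \<open>auto simp: in_keys_iff\<close>)

lemma peval_zero [simp]: "peval 0 a = 0"
  by (simp add: peval_def)

lemma peval_add: "peval (p + q) a = peval p a + peval q a"
proof -
  let ?K = "Poly_Mapping.keys p \<union> Poly_Mapping.keys q"
  have "peval (p + q) a = (\<Sum>m\<in>?K. Poly_Mapping.lookup (p + q) m * monom_eval m a)"
    by (rule peval_superset) (auto simp: keys_add)
  also have "\<dots> = (\<Sum>m\<in>?K. Poly_Mapping.lookup p m * monom_eval m a) +
                  (\<Sum>m\<in>?K. Poly_Mapping.lookup q m * monom_eval m a)"
    by (simp add: lookup_add distrib_right sum.distrib)
  also have "\<dots> = peval p a + peval q a"
    by (simp add: peval_superset[symmetric])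
  finally show ?thesis .
qed

lemma peval_sum: "peval (sum f I) a = (\<Sum>i\<in>I. peval (f i) a)"
  by (induction I rule: infinite_finite_induct) (auto simp: peval_add)

lemma peval_single: "peval (Poly_Mapping.single m c) a = c * monom_eval m a"
  by (subst peval_superset[of "{m}"]) auto

lemma sum_single_lookup: "(\<Sum>m\<in>Poly_Mapping.keys p. Poly_Mapping.single m (Poly_Mapping.lookup p m)) = p"
  by (rule poly_mapping_eqI)
     (auto simp: lookup_sum lookup_single when_def in_keys_iff sum.delta' split: if_splits)

lemma peval_mult: "peval (p * q) a = peval p a * peval q a"
proof -
  let ?P = "Poly_Mapping.keys p" and ?Q = "Poly_Mapping.keys q"
  have "p * q = (\<Sum>m\<in>?P. Poly_Mapping.single m (Poly_Mapping.lookup p m)) *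
                (\<Sum>n\<in>?Q. Poly_Mapping.single n (Poly_Mapping.lookup q n))"
    by (simp only: sum_single_lookup)
  also have "\<dots> = (\<Sum>m\<in>?P. \<Sum>n\<in>?Q. Poly_Mapping.single (m + n)
                      (Poly_Mapping.lookup p m * Poly_Mapping.lookup q n))"
    by (simp add: sum_product mult_single)
  finally have "peval (p * q) a = (\<Sum>m\<in>?P. \<Sum>n\<in>?Q.
      Poly_Mapping.lookup p m * Poly_Mapping.lookup q n * monom_eval m a * monom_eval n a)"
    by (simp add: peval_sum peval_single monom_eval_add mult_ac)
  also have "\<dots> = peval p a * peval q a"
    by (simp add: peval_eq_sum_monom_eval sum_product mult_ac)
  finally show ?thesis .
qed

lemma peval_one [simp]: "peval 1 a = 1"
  using peval_single[of 0 1 a] by simp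

lemma peval_diff: "peval (p - q) a = peval p a - peval q a"
  using peval_add[of "p - q" q a] by (simp add: eq_diff_eq)

lemma peval_power: "peval (p ^ n) a = peval p a ^ n"
  by (induction n) (auto simp: peval_mult)

lemma peval_prod: "peval (prod f I) a = (\<Prod>i\<in>I. peval (f i) a)"
  by (induction I rule: infinite_finite_induct) (auto simp: peval_mult)

lemma peval_mconst [simp]: "peval (mconst c) a = c"
  by (simp add: mconst_def peval_single)

lemma peval_mvar [simp]: "peval (mvar x) a = a x"
  by (simp add: mvar_def peval_single monom_eval_single)

section \<open>Homogeneous polynomials\<close>

definition monom_degree :: "('w \<Rightarrow>\<^sub>0 nat) \<Rightarrow> nat" where
  "monom_degree m = (\<Sum>x\<in>Poly_Mapping.keys m. Poly_Mapping.lookup m x)"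

lemma monom_degree_superset:
  assumes "finite K" "Poly_Mapping.keys m \<subseteq> K"
  shows "monom_degree m = (\<Sum>x\<in>K. Poly_Mapping.lookup m x)"
  unfolding monom_degree_def
  by (rule sum.mono_neutral_left) (use assms in \<open>auto simp: in_keys_iff\<close>)

lemma monom_degree_zero [simp]: "monom_degree 0 = 0"
  by (simp add: monom_degree_def)

lemma monom_degree_add: "monom_degree (m + n) = monom_degree m + monom_degree n"
proof -
  let ?K = "Poly_Mapping.keys m \<union> Poly_Mapping.keys n"
  have "monom_degree (m + n) = (\<Sum>x\<in>?K. Poly_Mapping.lookup (m + n) x)"
    by (rule monom_degree_superset) (auto simp: keys_add)
  also have "\<dots> = (\<Sum>x\<in>?K. Poly_Mapping.lookup m x) + (\<Sum>x\<in>?K. Poly_Mapping.lookup n x)"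
    by (simp add: lookup_add sum.distrib)
  also have "\<dots> = monom_degree m + monom_degree n"
    by (simp add: monom_degree_superset[symmetric])
  finally show ?thesis .
qed

lemma monom_eval_scale: "monom_eval m (\<lambda>x. c * a x) = c ^ monom_degree m * monom_eval m a"
  by (simp add: monom_eval_def monom_degree_def power_mult_distrib prod.distrib power_sum)

lemma homogeneous_iff: "homogeneous d p \<longleftrightarrow> (\<forall>m\<in>Poly_Mapping.keys p. monom_degree m = d)"
  by (simp add: homogeneous_def monom_degree_def)

lemma homogeneous_mult: "homogeneous d p \<Longrightarrow> homogeneous e q \<Longrightarrow> homogeneous (d + e) (p * q)"
  using keys_mult[of p q] unfolding homogeneous_iff by (auto simp: monom_degree_add)

lemma homogeneous_power: "homogeneous d p \<Longrightarrow> homogeneous (n * d) (p ^ n)"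
proof (induction n)
  case 0
  then show ?case by (simp add: homogeneous_iff)
next
  case (Suc n)
  then show ?case using homogeneous_mult[of d p "n * d"] by (simp add: add.commute)
qed

lemma homogeneous_single: "homogeneous (monom_degree m) (Poly_Mapping.single m c)"
  by (simp add: homogeneous_iff)

lemma homogeneous_sum: "(\<And>i. i \<in> I \<Longrightarrow> homogeneous d (f i)) \<Longrightarrow> homogeneous d (sum f I)"
  using keys_sum[of f I] unfolding homogeneous_iff by blast

lemma homogeneous_mvar: "homogeneous 1 (mvar x)"
  by (simp add: homogeneous_iff mvar_def monom_degree_def)

lemma peval_homogeneous_scale:
  assumes "homogeneous e p"
  shows "peval p (\<lambda>x. c * a x) = c ^ e * peval p a"
  using assms
  by (auto simp: peval_eq_sum_monom_eval monom_eval_scale homogeneous_iff sum_distrib_left mult_ac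
           intro!: sum.cong)

lemma mvar_power: "mvar x ^ e = Poly_Mapping.single (Poly_Mapping.single x e) 1"
  by (induction e) (simp_all add: mvar_def mult_single single_add[symmetric] add.commute)

lemma single_one_eq_prod_mvar:
  "(Poly_Mapping.single m 1 :: ('v, 'k::comm_ring_1) mpoly)
     = (\<Prod>x\<in>Poly_Mapping.keys m. mvar x ^ Poly_Mapping.lookup m x)"
proof -
  have "(\<Prod>x\<in>K. Poly_Mapping.single (f x) 1) = Poly_Mapping.single (\<Sum>x\<in>K. f x) (1 :: 'k)"
    for K and f :: "'v \<Rightarrow> 'v \<Rightarrow>\<^sub>0 nat"
    by (induction K rule: infinite_finite_induct) (auto simp: mult_single)
  then show ?thesis by (simp add: mvar_power sum_single_lookup[of m])
qed

lemma mconst_mult: "mconst c * mconst d = mconst (c * d)"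
  by (simp add: mconst_def mult_single)

lemma mconst_one: "mconst 1 = 1"
  by (simp add: mconst_def)

lemma mconst_zero: "mconst 0 = 0"
  by (simp add: mconst_def)

lemma mconst_single: "mconst c * Poly_Mapping.single m 1 = Poly_Mapping.single m c"
  by (simp add: mconst_def mult_single)

lemma mconst_sum: "mconst (\<Sum>i\<in>I. f i) = (\<Sum>i\<in>I. mconst (f i))"
  by (induction I rule: infinite_finite_induct) (auto simp: mconst_def single_add)

lemma mconst_prod: "mconst (\<Prod>i\<in>I. f i) = (\<Prod>i\<in>I. mconst (f i))"
  by (induction I rule: infinite_finite_induct) (auto simp: mconst_mult[symmetric] mconst_one)

lemma mconst_power: "mconst (c ^ n) = mconst c ^ n"
  using mconst_prod[of "\<lambda>_. c" "{..<n}"] by simp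

definition monoms_of_degree :: "nat \<Rightarrow> ('v::finite \<Rightarrow>\<^sub>0 nat) set" where
  "monoms_of_degree e = {m. monom_degree m = e}"

lemma homogeneous_keys_subset: "homogeneous e p \<Longrightarrow> Poly_Mapping.keys p \<subseteq> monoms_of_degree e"
  by (auto simp: homogeneous_iff monoms_of_degree_def)

lemma bij_betw_multisets_monoms_of_degree:
  "bij_betw (\<lambda>M. Abs_poly_mapping (count M)) (multisets_of_size UNIV e)
     (monoms_of_degree e :: ('v::finite \<Rightarrow>\<^sub>0 nat) set)"
proof -
  have lookup_count: "Poly_Mapping.lookup (Abs_poly_mapping (count M)) = count M" for M :: "'v multiset"
    by (simp add: lookup_Abs_poly_mapping)
  have count_lookup: "count (Abs_multiset (Poly_Mapping.lookup m)) = Poly_Mapping.lookup m"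
    for m :: "'v \<Rightarrow>\<^sub>0 nat"
    by (simp add: count_Abs_multiset)
  have size_eq: "size M = (\<Sum>x\<in>UNIV. count M x)" for M :: "'v multiset"
    unfolding size_multiset_overloaded_eq
    by (rule sum.mono_neutral_left) (auto simp: count_eq_zero_iff)
  have degree_eq: "monom_degree m = (\<Sum>x\<in>UNIV. Poly_Mapping.lookup m x)" for m :: "'v \<Rightarrow>\<^sub>0 nat"
    by (rule monom_degree_superset) auto
  show ?thesis
    by (rule bij_betw_byWitness[where f' = "\<lambda>m. Abs_multiset (Poly_Mapping.lookup m)"])
       (auto simp: multisets_of_size_def monoms_of_degree_def lookup_count count_lookup size_eq
         degree_eq)
qed

lemma finite_monoms_of_degree: "finite (monoms_of_degree e :: ('v::finite \<Rightarrow>\<^sub>0 nat) set)"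
  using bij_betw_finite[OF bij_betw_multisets_monoms_of_degree] by (simp add: finite_multisets_of_size)

lemma card_monoms_of_degree:
  fixes e :: nat
  defines "N \<equiv> card (UNIV :: 'v::finite set) - 1"
  shows "card (monoms_of_degree e :: ('v \<Rightarrow>\<^sub>0 nat) set) = (e + N) choose N"
proof -
  have "card (monoms_of_degree e :: ('v \<Rightarrow>\<^sub>0 nat) set) = (card (UNIV :: 'v set) + e - 1) choose e"
    using bij_betw_same_card[OF bij_betw_multisets_monoms_of_degree[where 'v = 'v, of e]]
    by (simp add: card_multisets_of_size)
  also have "\<dots> = (e + N) choose N"
    using binomial_symmetric[of N "e + N"] card_gt_0_iff[of "UNIV :: 'v set"]
    by (simp add: N_def add.commute)
  finally show ?thesis .
qed

section \<open>Ideals of points\<close>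

lemma is_ideal_ideal_gen: "is_ideal (ideal_gen S)"
  unfolding ideal_gen_def is_ideal_def by (auto simp: Inter_iff)

lemma ideal_gen_subset: "S \<subseteq> ideal_gen S"
  unfolding ideal_gen_def by blast

lemma ideal_gen_minimal: "is_ideal J \<Longrightarrow> S \<subseteq> J \<Longrightarrow> ideal_gen S \<subseteq> J"
  unfolding ideal_gen_def by blast

lemma ideal_zero: "is_ideal J \<Longrightarrow> 0 \<in> J"
  unfolding is_ideal_def by blast

lemma ideal_add: "is_ideal J \<Longrightarrow> x \<in> J \<Longrightarrow> y \<in> J \<Longrightarrow> x + y \<in> J"
  unfolding is_ideal_def by blast

lemma ideal_mult_left: "is_ideal J \<Longrightarrow> x \<in> J \<Longrightarrow> r * x \<in> J"
  unfolding is_ideal_def by blast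

lemma ideal_sum: "is_ideal J \<Longrightarrow> (\<And>i. i \<in> I \<Longrightarrow> f i \<in> J) \<Longrightarrow> sum f I \<in> J"
  by (induction I rule: infinite_finite_induct) (auto simp: ideal_zero ideal_add)

lemma ideal_prod_diff:
  assumes J: "is_ideal J" and fg: "\<And>i. i \<in> I \<Longrightarrow> f i - g i \<in> J"
  shows "prod f I - prod g I \<in> J"
  using fg
proof (induction I rule: infinite_finite_induct)
  case (insert i I)
  have "f i * prod f I - g i * prod g I = f i * (prod f I - prod g I) + prod g I * (f i - g i)"
    by (simp add: algebra_simps)
  with insert show ?case by (simp add: ideal_add ideal_mult_left J)
qed (simp_all add: ideal_zero J)

lemma ideal_power_diff: "is_ideal J \<Longrightarrow> x - y \<in> J \<Longrightarrow> x ^ n - y ^ n \<in> J"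
  using ideal_prod_diff[of J "{..<n}" "\<lambda>_. x" "\<lambda>_. y"] by simp

lemma power_mem_ideal_pow: "x \<in> I \<Longrightarrow> x ^ m \<in> ideal_pow I m"
proof (induction m)
  case (Suc m)
  then have "x * x ^ m \<in> {x * y | x y. x \<in> I \<and> y \<in> ideal_pow I m}" by blast
  then show ?case using ideal_gen_subset by force
qed simp

lemma is_ideal_point_ideal: "is_ideal (point_ideal a)"
  by (simp add: point_ideal_def is_ideal_ideal_gen)

lemma peval_point_ideal: "p \<in> point_ideal a \<Longrightarrow> peval p a = 0"
proof -
  have "is_ideal {p. peval p a = 0}"
    unfolding is_ideal_def by (auto simp: peval_add peval_mult)
  then have "point_ideal a \<subseteq> {p. peval p a = 0}"
    unfolding point_ideal_def
    by (rule ideal_gen_minimal) (auto simp: peval_diff peval_mult mult.commute)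
  then show "p \<in> point_ideal a \<Longrightarrow> peval p a = 0" by blast
qed

lemma mvar_cong_point_ideal:
  fixes a :: "'v \<Rightarrow> 'k::field"
  assumes "a k \<noteq> 0"
  shows "mvar x - mconst (a x / a k) * mvar k \<in> point_ideal a"
proof -
  have "mconst (a k) * mvar x - mconst (a x) * mvar k \<in> point_ideal a"
    unfolding point_ideal_def by (rule subsetD[OF ideal_gen_subset]) blast
  then have "mconst (inverse (a k)) * (mconst (a k) * mvar x - mconst (a x) * mvar k) \<in> point_ideal a"
    by (rule ideal_mult_left[OF is_ideal_point_ideal])
  also have "mconst (inverse (a k)) * (mconst (a k) * mvar x - mconst (a x) * mvar k)
      = mconst (inverse (a k) * a k) * mvar x - mconst (inverse (a k) * a x) * mvar k"
    by (simp add: right_diff_distrib mult.assoc[symmetric] mconst_mult)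
  also have "\<dots> = mvar x - mconst (a x / a k) * mvar k"
    using assms by (simp add: mconst_one divide_inverse mult.commute)
  finally show ?thesis .
qed

lemma monom_cong_point_ideal:
  fixes a :: "'v \<Rightarrow> 'k::field"
  assumes "a k \<noteq> 0"
  shows "Poly_Mapping.single m 1 - mconst (monom_eval m (\<lambda>x. a x / a k)) * mvar k ^ monom_degree m
    \<in> point_ideal a"
proof -
  let ?b = "\<lambda>x. a x / a k"
  have "mconst (monom_eval m ?b) * mvar k ^ monom_degree m
      = (\<Prod>x\<in>Poly_Mapping.keys m. (mconst (?b x) * mvar k) ^ Poly_Mapping.lookup m x)"
    by (simp add: monom_eval_def monom_degree_def mconst_prod mconst_power power_mult_distrib
        prod.distrib power_sum)
  moreover have "(\<Prod>x\<in>Poly_Mapping.keys m. mvar x ^ Poly_Mapping.lookup m x)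
      - (\<Prod>x\<in>Poly_Mapping.keys m. (mconst (?b x) * mvar k) ^ Poly_Mapping.lookup m x) \<in> point_ideal a"
    by (intro ideal_prod_diff ideal_power_diff is_ideal_point_ideal mvar_cong_point_ideal assms)
  ultimately show ?thesis by (simp add: single_one_eq_prod_mvar)
qed

text \<open>The hypothesis a k \<noteq> 0 is essential: the ideal of the zero vector is the zero ideal.\<close>

lemma homogeneous_vanishing_mem_point_ideal:
  fixes a :: "'v \<Rightarrow> 'k::field"
  assumes ak: "a k \<noteq> 0" and hom: "homogeneous e p" and van: "peval p a = 0"
  shows "p \<in> point_ideal a"
proof -
  let ?b = "\<lambda>x. a x / a k" and ?c = "Poly_Mapping.lookup p"
  have "peval p ?b = 0"
    using peval_homogeneous_scale[OF hom, of "inverse (a k)" a] van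
    by (simp add: divide_inverse mult.commute)
  then have "p = p - mconst (peval p ?b) * mvar k ^ e"
    by (simp add: mconst_zero)
  also have "\<dots> = (\<Sum>m\<in>Poly_Mapping.keys p. mconst (?c m) *
      (Poly_Mapping.single m 1 - mconst (monom_eval m ?b) * mvar k ^ monom_degree m))"
  proof -
    have "mconst (?c m) * (Poly_Mapping.single m 1 - mconst (monom_eval m ?b) * mvar k ^ monom_degree m)
        = Poly_Mapping.single m (?c m) - mconst (?c m * monom_eval m ?b) * mvar k ^ e"
      if "m \<in> Poly_Mapping.keys p" for m
      using that hom
      by (simp add: homogeneous_iff right_diff_distrib mconst_single mconst_mult mult.assoc[symmetric])
    then show ?thesis
      by (simp add: sum_subtractf sum_single_lookup mconst_sum[symmetric] sum_distrib_right[symmetric]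
          peval_eq_sum_monom_eval)
  qed
  also have "\<dots> \<in> point_ideal a"
    by (intro ideal_sum ideal_mult_left is_ideal_point_ideal monom_cong_point_ideal ak)
  finally show ?thesis .
qed

section \<open>Nonvanishing of polynomials over infinite fields\<close>

lemma ex_poly_nonroot:
  fixes P :: "'k::idom poly"
  assumes "infinite (UNIV :: 'k set)" "P \<noteq> 0"
  shows "\<exists>t. poly P t \<noteq> 0"
  using ex_new_if_finite[OF assms(1) poly_roots_finite[OF assms(2)]] by blast

text \<open>Induction on the set of variables: grouping by the exponent of one variable turns the
  sum into a univariate polynomial whose coefficients are sums of the same kind.\<close>

lemma ex_nonroot_monom_sum:
  fixes c :: "('w \<Rightarrow>\<^sub>0 nat) \<Rightarrow> 'k::idom"
  assumes "infinite (UNIV :: 'k set)" and "finite V" "finite C"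
    and "\<forall>\<nu>\<in>C. \<forall>\<mu>\<in>C. (\<forall>w\<in>V. Poly_Mapping.lookup \<nu> w = Poly_Mapping.lookup \<mu> w) \<longrightarrow> \<nu> = \<mu>"
    and "\<nu>0 \<in> C" "c \<nu>0 \<noteq> 0"
  shows "\<exists>x. (\<Sum>\<nu>\<in>C. c \<nu> * (\<Prod>w\<in>V. x w ^ Poly_Mapping.lookup \<nu> w)) \<noteq> 0"
  using assms(2-)
proof (induction V arbitrary: C \<nu>0 rule: finite_induct)
  case empty
  then have "C = {\<nu>0}" by auto
  with empty show ?case by simp
next
  case (insert v V)
  let ?e = "\<lambda>\<nu>. Poly_Mapping.lookup \<nu> v"
  let ?C = "\<lambda>j. {\<nu>\<in>C. ?e \<nu> = j}"
  have "\<exists>x. (\<Sum>\<nu>\<in>?C (?e \<nu>0). c \<nu> * (\<Prod>w\<in>V. x w ^ Poly_Mapping.lookup \<nu> w)) \<noteq> 0"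
    by (rule insert.IH) (use insert.prems in auto)
  then obtain x where x: "(\<Sum>\<nu>\<in>?C (?e \<nu>0). c \<nu> * (\<Prod>w\<in>V. x w ^ Poly_Mapping.lookup \<nu> w)) \<noteq> 0"
    by blast
  define g where "g j = (\<Sum>\<nu>\<in>?C j. c \<nu> * (\<Prod>w\<in>V. x w ^ Poly_Mapping.lookup \<nu> w))" for j
  define P where "P = (\<Sum>j\<in>?e ` C. monom (g j) j)"
  have "coeff P (?e \<nu>0) = g (?e \<nu>0)"
    using insert.prems(1,3) by (simp add: P_def coeff_sum coeff_monom sum.delta)
  with x have "P \<noteq> 0" by (auto simp: g_def)
  then obtain t where t: "poly P t \<noteq> 0"
    using ex_poly_nonroot[OF assms(1)] by blast
  have "(\<Sum>\<nu>\<in>C. c \<nu> * (\<Prod>w\<in>insert v V. (x(v := t)) w ^ Poly_Mapping.lookup \<nu> w))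
      = (\<Sum>\<nu>\<in>C. t ^ ?e \<nu> * (c \<nu> * (\<Prod>w\<in>V. x w ^ Poly_Mapping.lookup \<nu> w)))"
  proof (rule sum.cong[OF refl])
    fix \<nu>
    have "(\<Prod>w\<in>V. (x(v := t)) w ^ Poly_Mapping.lookup \<nu> w) = (\<Prod>w\<in>V. x w ^ Poly_Mapping.lookup \<nu> w)"
      using insert.hyps(2) by (auto intro!: prod.cong)
    with insert.hyps show "c \<nu> * (\<Prod>w\<in>insert v V. (x(v := t)) w ^ Poly_Mapping.lookup \<nu> w)
        = t ^ ?e \<nu> * (c \<nu> * (\<Prod>w\<in>V. x w ^ Poly_Mapping.lookup \<nu> w))"
      by simp
  qed
  also have "\<dots> = (\<Sum>j\<in>?e ` C. \<Sum>\<nu>\<in>?C j. t ^ ?e \<nu> * (c \<nu> * (\<Prod>w\<in>V. x w ^ Poly_Mapping.lookup \<nu> w)))"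
    by (rule sum.group[symmetric]) (use insert.prems(1) in auto)
  also have "\<dots> = poly P t"
    by (simp add: P_def g_def poly_sum poly_monom sum_distrib_left mult.commute)
  finally have "(\<Sum>\<nu>\<in>C. c \<nu> * (\<Prod>w\<in>insert v V. (x(v := t)) w ^ Poly_Mapping.lookup \<nu> w)) \<noteq> 0"
    using t by simp
  then show ?case by blast
qed

lemma finite_mvars: "finite (mvars p)"
  by (simp add: mvars_def)

lemma ex_peval_nonzero:
  fixes p :: "('w, 'k::idom) mpoly"
  assumes "infinite (UNIV :: 'k set)" "p \<noteq> 0"
  shows "\<exists>x. peval p x \<noteq> 0"
proof -
  let ?V = "mvars p"
  have sub: "Poly_Mapping.keys m \<subseteq> ?V" if "m \<in> Poly_Mapping.keys p" for m
    using that by (auto simp: mvars_def)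
  obtain m0 where m0: "m0 \<in> Poly_Mapping.keys p"
    using assms(2) by (metis all_not_in_conv keys_eq_empty)
  have inj: "\<forall>\<nu>\<in>Poly_Mapping.keys p. \<forall>\<mu>\<in>Poly_Mapping.keys p.
      (\<forall>w\<in>?V. Poly_Mapping.lookup \<nu> w = Poly_Mapping.lookup \<mu> w) \<longrightarrow> \<nu> = \<mu>"
  proof (intro ballI impI poly_mapping_eqI)
    fix \<nu> \<mu> w
    assume \<nu>: "\<nu> \<in> Poly_Mapping.keys p" and \<mu>: "\<mu> \<in> Poly_Mapping.keys p"
      and eq: "\<forall>w\<in>?V. Poly_Mapping.lookup \<nu> w = Poly_Mapping.lookup \<mu> w"
    show "Poly_Mapping.lookup \<nu> w = Poly_Mapping.lookup \<mu> w"
    proof (cases "w \<in> ?V")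
      case False
      then have "w \<notin> Poly_Mapping.keys \<nu>" "w \<notin> Poly_Mapping.keys \<mu>"
        using sub[OF \<nu>] sub[OF \<mu>] by blast+
      then show ?thesis by (simp add: in_keys_iff)
    qed (use eq in blast)
  qed
  have "peval p x = (\<Sum>\<nu>\<in>Poly_Mapping.keys p.
      Poly_Mapping.lookup p \<nu> * (\<Prod>w\<in>?V. x w ^ Poly_Mapping.lookup \<nu> w))" for x
    unfolding peval_eq_sum_monom_eval
    by (rule sum.cong[OF refl]) (simp add: monom_eval_superset[OF finite_mvars sub])
  moreover have "\<exists>x. (\<Sum>\<nu>\<in>Poly_Mapping.keys p.
      Poly_Mapping.lookup p \<nu> * (\<Prod>w\<in>?V. x w ^ Poly_Mapping.lookup \<nu> w)) \<noteq> 0"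
    by (rule ex_nonroot_monom_sum[OF assms(1) finite_mvars finite_keys inj m0])
       (use m0 in \<open>simp add: in_keys_iff\<close>)
  ultimately show ?thesis by simp
qed

text \<open>Restrict both polynomials to the line through a nonroot of each.\<close>

lemma ex_common_nonroot:
  fixes p q :: "('w, 'k::idom) mpoly"
  assumes "infinite (UNIV :: 'k set)" "peval p x0 \<noteq> 0" "peval q x1 \<noteq> 0"
  shows "\<exists>x. peval p x \<noteq> 0 \<and> peval q x \<noteq> 0"
proof -
  define L where "L r = (\<Sum>m\<in>Poly_Mapping.keys r. [:Poly_Mapping.lookup r m:] *
      (\<Prod>w\<in>Poly_Mapping.keys m. [:x0 w, x1 w - x0 w:] ^ Poly_Mapping.lookup m w))"
    for r :: "('w, 'k) mpoly"
  have poly_L: "poly (L r) t = peval r (\<lambda>w. x0 w + t * (x1 w - x0 w))" for r t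
    by (simp add: L_def peval_def poly_sum poly_prod poly_power)
  have "L p \<noteq> 0" "L q \<noteq> 0"
    using poly_L[of p 0] poly_L[of q 1] assms(2,3) by auto
  then obtain t where "poly (L p * L q) t \<noteq> 0"
    using ex_poly_nonroot[OF assms(1), of "L p * L q"] by auto
  then show ?thesis by (auto simp: poly_L)
qed

section \<open>Evaluation matrices\<close>

definition eval_mat ::
  "nat \<Rightarrow> (nat \<Rightarrow> ('v \<Rightarrow>\<^sub>0 nat)) \<Rightarrow> (nat \<Rightarrow> 'v \<Rightarrow> 'k::comm_ring_1) \<Rightarrow> 'k mat" where
  "eval_mat n mo a = mat n n (\<lambda>(i, j). monom_eval (mo j) (a i))"

lemma eval_mat_mult_coeffs:
  assumes bij: "bij_betw mo {0..<n} (monoms_of_degree d)" and "i < n" and hom: "homogeneous d q"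
  shows "(eval_mat n mo a *\<^sub>v vec n (\<lambda>j. Poly_Mapping.lookup q (mo j))) $ i = peval q (a i)"
proof -
  have "(eval_mat n mo a *\<^sub>v vec n (\<lambda>j. Poly_Mapping.lookup q (mo j))) $ i
      = (\<Sum>j\<in>{0..<n}. Poly_Mapping.lookup q (mo j) * monom_eval (mo j) (a i))"
    using \<open>i < n\<close> by (simp add: eval_mat_def scalar_prod_def mult.commute)
  also have "\<dots> = (\<Sum>m\<in>monoms_of_degree d. Poly_Mapping.lookup q m * monom_eval m (a i))"
    by (rule sum.reindex_bij_betw[OF bij])
  also have "\<dots> = peval q (a i)"
    by (rule peval_superset[symmetric, OF finite_monoms_of_degree homogeneous_keys_subset[OF hom]])
  finally show ?thesis .
qed

lemma homogeneous_vanishing_eq_0: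
  fixes a :: "nat \<Rightarrow> 'v::finite \<Rightarrow> 'k::field"
  assumes bij: "bij_betw mo {0..<n} (monoms_of_degree d)" and det: "det (eval_mat n mo a) \<noteq> 0"
    and hom: "homogeneous d q" and van: "\<forall>i<n. peval q (a i) = 0"
  shows "q = 0"
proof -
  let ?v = "vec n (\<lambda>j. Poly_Mapping.lookup q (mo j))"
  have M: "eval_mat n mo a \<in> carrier_mat n n"
    by (simp add: eval_mat_def)
  have "\<not> (\<exists>v. v \<in> carrier_vec n \<and> v \<noteq> 0\<^sub>v n \<and> eval_mat n mo a *\<^sub>v v = 0\<^sub>v n)"
    using det det_0_iff_vec_prod_zero_field[OF M] by simp
  moreover have "eval_mat n mo a *\<^sub>v ?v = 0\<^sub>v n"
    using eval_mat_mult_coeffs[OF bij _ hom] van by (intro eq_vecI) (auto simp: eval_mat_def)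
  ultimately have "?v = 0\<^sub>v n"
    using vec_carrier by blast
  then have coeff_0: "Poly_Mapping.lookup q (mo j) = 0" if "j < n" for j
    using that by (metis index_vec index_zero_vec(1))
  have "Poly_Mapping.keys q \<subseteq> mo ` {0..<n}"
    using homogeneous_keys_subset[OF hom] bij by (simp add: bij_betw_def)
  moreover have "m \<notin> Poly_Mapping.keys q" if "m \<in> mo ` {0..<n}" for m
    using that coeff_0 by (auto simp: in_keys_iff)
  ultimately have "Poly_Mapping.keys q = {}"
    by blast
  then show ?thesis by simp
qed

lemma det_zero_row:
  assumes A: "A \<in> carrier_mat n n" and "k < n" and zero: "\<And>j. j < n \<Longrightarrow> A $$ (k, j) = 0"
  shows "det A = 0"
  unfolding det_def'[OF A]
proof (intro sum.neutral ballI)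
  fix \<sigma> assume "\<sigma> \<in> {\<sigma>. \<sigma> permutes {0..<n}}"
  then have "\<sigma> k < n"
    using permutes_in_image[of \<sigma> "{0..<n}" k] \<open>k < n\<close> by auto
  then have "(\<Prod>i = 0..<n. A $$ (i, \<sigma> i)) = 0"
    using \<open>k < n\<close> zero by (intro prod_zero bexI[of _ k]) auto
  then show "signof \<sigma> * (\<Prod>i = 0..<n. A $$ (i, \<sigma> i)) = 0" by simp
qed

lemma lookup_sum_single_inj:
  fixes n :: nat
  assumes "inj_on mo {0..<n}" "j < n"
  shows "Poly_Mapping.lookup (\<Sum>j' = 0..<n. Poly_Mapping.single (mo j') (c j')) (mo j) = c j"
proof -
  have "Poly_Mapping.lookup (\<Sum>j' = 0..<n. Poly_Mapping.single (mo j') (c j')) (mo j)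
      = (\<Sum>j' = 0..<n. if j' = j then c j' else 0)"
    unfolding lookup_sum
  proof (intro sum.cong refl)
    fix j' assume "j' \<in> {0..<n}"
    then have "mo j' = mo j \<longleftrightarrow> j' = j"
      using inj_on_eq_iff[OF assms(1), of j' j] assms(2) by simp
    then show "Poly_Mapping.lookup (Poly_Mapping.single (mo j') (c j')) (mo j)
        = (if j' = j then c j' else 0)"
      by (simp add: lookup_single when_def)
  qed
  with assms(2) show ?thesis by simp
qed

lemma ex_homogeneous_vanishing:
  fixes a :: "nat \<Rightarrow> 'v::finite \<Rightarrow> 'k::field"
  assumes "s < card (monoms_of_degree d :: ('v \<Rightarrow>\<^sub>0 nat) set)"
  shows "\<exists>q. q \<noteq> 0 \<and> homogeneous d q \<and> (\<forall>i<s. peval q (a i) = 0)"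
proof -
  define n where "n = card (monoms_of_degree d :: ('v \<Rightarrow>\<^sub>0 nat) set)"
  obtain mo where bij: "bij_betw mo {0..<n} (monoms_of_degree d :: ('v \<Rightarrow>\<^sub>0 nat) set)"
    using ex_bij_betw_nat_finite[OF finite_monoms_of_degree] unfolding n_def by blast
  have "s < n" using assms by (simp add: n_def)
  define A where "A = mat n n (\<lambda>(i, j). if i < s then monom_eval (mo j) (a i) else (0::'k))"
  have A: "A \<in> carrier_mat n n" by (simp add: A_def)
  have "det A = 0"
    by (rule det_zero_row[OF A, of "n - 1"]) (use \<open>s < n\<close> in \<open>auto simp: A_def\<close>)
  then obtain v where v: "v \<in> carrier_vec n" "v \<noteq> 0\<^sub>v n" "A *\<^sub>v v = 0\<^sub>v n"
    using det_0_iff_vec_prod_zero_field[OF A] by blast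
  define q where "q = (\<Sum>j = 0..<n. Poly_Mapping.single (mo j) (v $ j))"
  obtain j where "j < n" "v $ j \<noteq> 0"
    using v(1,2) by (metis carrier_vecD eq_vecI index_zero_vec)
  then have "q \<noteq> 0"
    using lookup_sum_single_inj[of mo n j "\<lambda>j. v $ j"] bij by (auto simp: q_def bij_betw_def)
  moreover have "homogeneous d q"
    unfolding q_def
  proof (intro homogeneous_sum)
    fix j assume "j \<in> {0..<n}"
    then have "monom_degree (mo j) = d"
      using bij by (auto simp: bij_betw_def monoms_of_degree_def)
    then show "homogeneous d (Poly_Mapping.single (mo j) (v $ j))"
      using homogeneous_single[of "mo j"] by simp
  qed
  moreover have "peval q (a i) = 0" if "i < s" for i
  proof -
    have "peval q (a i) = (A *\<^sub>v v) $ i"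
      using that \<open>s < n\<close> v(1)
      by (simp add: q_def A_def peval_sum peval_single scalar_prod_def mult.commute)
    with v(3) that \<open>s < n\<close> show ?thesis by simp
  qed
  ultimately show ?thesis by blast
qed

definition det_monom ::
  "nat \<Rightarrow> (nat \<Rightarrow> ('v::finite \<Rightarrow>\<^sub>0 nat)) \<Rightarrow> (nat \<Rightarrow> nat) \<Rightarrow> (nat \<times> 'v) \<Rightarrow>\<^sub>0 nat" where
  "det_monom n mo \<sigma> =
     Abs_poly_mapping (\<lambda>(i, v). if i < n then Poly_Mapping.lookup (mo (\<sigma> i)) v else 0)"

definition det_poly ::
  "nat \<Rightarrow> (nat \<Rightarrow> ('v::finite \<Rightarrow>\<^sub>0 nat)) \<Rightarrow> (nat \<times> 'v, 'k::comm_ring_1) mpoly" where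
  "det_poly n mo =
     (\<Sum>\<sigma> | \<sigma> permutes {0..<n}. Poly_Mapping.single (det_monom n mo \<sigma>) (signof \<sigma>))"

lemma lookup_det_monom:
  "Poly_Mapping.lookup (det_monom n mo \<sigma>)
     = (\<lambda>(i, v). if i < n then Poly_Mapping.lookup (mo (\<sigma> i)) v else 0)"
proof -
  have "{x. (case x of (i, v) \<Rightarrow> if i < n then Poly_Mapping.lookup (mo (\<sigma> i)) v else 0) \<noteq> 0}
      \<subseteq> {..<n} \<times> UNIV"
    by (auto split: if_splits)
  then show ?thesis
    unfolding det_monom_def by (subst lookup_Abs_poly_mapping) (auto intro: finite_subset)
qed

lemma keys_det_monom: "Poly_Mapping.keys (det_monom n mo \<sigma>) \<subseteq> {..<n} \<times> UNIV"
  by (auto simp: in_keys_iff lookup_det_monom split: if_splits)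

lemma monom_eval_det_monom:
  "monom_eval (det_monom n mo \<sigma>) (case_prod a) = (\<Prod>i = 0..<n. monom_eval (mo (\<sigma> i)) (a i))"
proof -
  have "monom_eval (det_monom n mo \<sigma>) (case_prod a)
      = (\<Prod>x\<in>{0..<n} \<times> UNIV. case_prod a x ^ Poly_Mapping.lookup (det_monom n mo \<sigma>) x)"
    using keys_det_monom[of n mo \<sigma>] by (intro monom_eval_superset) (auto simp: atLeast0LessThan)
  also have "\<dots> = (\<Prod>i = 0..<n. \<Prod>v\<in>UNIV. a i v ^ Poly_Mapping.lookup (mo (\<sigma> i)) v)"
    by (auto simp: prod.cartesian_product lookup_det_monom intro!: prod.cong)
  also have "\<dots> = (\<Prod>i = 0..<n. monom_eval (mo (\<sigma> i)) (a i))"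
    by (rule prod.cong[OF refl], rule monom_eval_superset[symmetric]) auto
  finally show ?thesis .
qed

lemma peval_det_poly: "peval (det_poly n mo) (case_prod a) = det (eval_mat n mo a)"
proof -
  have "peval (det_poly n mo) (case_prod a)
      = (\<Sum>\<sigma> | \<sigma> permutes {0..<n}. signof \<sigma> * (\<Prod>i = 0..<n. monom_eval (mo (\<sigma> i)) (a i)))"
    by (simp add: det_poly_def peval_sum peval_single monom_eval_det_monom)
  also have "\<dots> = (\<Sum>\<sigma> | \<sigma> permutes {0..<n}. signof \<sigma> * (\<Prod>i = 0..<n. eval_mat n mo a $$ (i, \<sigma> i)))"
  proof (intro sum.cong refl arg_cong2[where f = "(*)"] prod.cong)
    fix \<sigma> i assume "\<sigma> \<in> {\<sigma>. \<sigma> permutes {0..<n}}" "i \<in> {0..<n}"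
    then show "monom_eval (mo (\<sigma> i)) (a i) = eval_mat n mo a $$ (i, \<sigma> i)"
      using permutes_in_image[of \<sigma> "{0..<n}" i] by (simp add: eval_mat_def)
  qed
  also have "\<dots> = det (eval_mat n mo a)"
    by (rule det_def'[symmetric]) (simp add: eval_mat_def)
  finally show ?thesis .
qed

lemma mvars_det_poly: "mvars (det_poly n mo) \<subseteq> {..<n} \<times> UNIV"
  using keys_sum[of "\<lambda>\<sigma>. Poly_Mapping.single (det_monom n mo \<sigma>) (signof \<sigma>)" "{\<sigma>. \<sigma> permutes {0..<n}}"]
    keys_det_monom
  by (fastforce simp: mvars_def det_poly_def split: if_splits)

lemma det_monom_inj:
  assumes inj: "inj_on mo {0..<n}" and \<sigma>: "\<sigma> permutes {0..<n}" and \<tau>: "\<tau> permutes {0..<n}"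
    and eq: "det_monom n mo \<sigma> = det_monom n mo \<tau>"
  shows "\<sigma> = \<tau>"
proof
  fix i show "\<sigma> i = \<tau> i"
  proof (cases "i < n")
    case True
    then have "Poly_Mapping.lookup (mo (\<sigma> i)) v = Poly_Mapping.lookup (mo (\<tau> i)) v" for v
      using arg_cong[OF eq, of "\<lambda>m. Poly_Mapping.lookup m (i, v)"] by (simp add: lookup_det_monom)
    then have "mo (\<sigma> i) = mo (\<tau> i)" by (simp add: poly_mapping_eqI)
    moreover have "\<sigma> i \<in> {0..<n}" "\<tau> i \<in> {0..<n}"
      using permutes_in_image[OF \<sigma>] permutes_in_image[OF \<tau>] True by auto
    ultimately show ?thesis using inj by (simp add: inj_on_def)
  next
    case False
    then show ?thesis using permutes_not_in[OF \<sigma>] permutes_not_in[OF \<tau>] by simp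
  qed
qed

lemma det_poly_nonzero:
  assumes "inj_on mo {0..<n}"
  shows "(det_poly n mo :: (nat \<times> 'v::finite, 'k::comm_ring_1) mpoly) \<noteq> 0"
proof -
  have "Poly_Mapping.lookup (det_poly n mo :: (nat \<times> 'v, 'k) mpoly) (det_monom n mo id)
      = (\<Sum>\<sigma> | \<sigma> permutes {0..<n}. if \<sigma> = id then 1 else 0)"
    unfolding det_poly_def lookup_sum
    using det_monom_inj[OF assms _ permutes_id]
    by (intro sum.cong) (auto simp: lookup_single when_def signof_id)
  also have "\<dots> = 1"
    using permutes_id[of "{0..<n}"] finite_permutations[of "{0..<n}"] by (simp add: sum.delta)
  finally show ?thesis by auto
qed

section \<open>General sets of points\<close>

lemma mvars_mult: "mvars (p * q) \<subseteq> mvars p \<union> mvars q"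
proof
  fix x assume "x \<in> mvars (p * q)"
  then obtain m where m: "m \<in> Poly_Mapping.keys (p * q)" "x \<in> Poly_Mapping.keys m"
    by (auto simp: mvars_def)
  then obtain a b where "a \<in> Poly_Mapping.keys p" "b \<in> Poly_Mapping.keys q" "m = a + b"
    using keys_mult[of p q] by blast
  with m(2) show "x \<in> mvars p \<union> mvars q"
    using keys_add[of a b] by (auto simp: mvars_def)
qed

lemma mvars_prod: "mvars (\<Prod>i\<in>I. f i) \<subseteq> (\<Union>i\<in>I. mvars (f i))"
proof (induction I rule: infinite_finite_induct)
  case (insert x F)
  then show ?case using mvars_mult[of "f x" "prod f F"] by auto
qed (auto simp: mvars_def)

lemma mvars_mvar: "mvars (mvar x) = {x}"
  by (simp add: mvars_def mvar_def)

lemma general_points_refine: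
  fixes D :: "(nat \<times> 'v, 'k::idom) mpoly"
  assumes "infinite (UNIV :: 'k set)" and P: "general_points t P" and "t \<le> s"
    and D: "mvars D \<subseteq> {..<s} \<times> UNIV" "peval D x \<noteq> 0"
    and PQ: "\<And>a. P a \<Longrightarrow> peval D (case_prod a) \<noteq> 0 \<Longrightarrow> Q a"
  shows "general_points s Q"
proof -
  obtain S :: "(nat \<times> 'v, 'k) mpoly set" where
    S: "\<forall>h\<in>S. mvars h \<subseteq> {..<t} \<times> UNIV" "\<exists>a. \<exists>h\<in>S. peval h (case_prod a) \<noteq> 0"
       "\<forall>a. (\<exists>h\<in>S. peval h (case_prod a) \<noteq> 0) \<longrightarrow> P a"
    using P unfolding general_points_def by blast
  obtain a h where h: "h \<in> S" "peval h (case_prod a) \<noteq> 0"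
    using S(2) by blast
  then obtain y where y: "peval h y \<noteq> 0" "peval D y \<noteq> 0"
    using ex_common_nonroot[OF assms(1) h(2) D(2)] by blast
  show ?thesis
    unfolding general_points_def
  proof (intro exI[of _ "(\<lambda>h. h * D) ` S"] conjI ballI)
    fix g assume "g \<in> (\<lambda>h. h * D) ` S"
    then obtain h where "h \<in> S" "g = h * D" by blast
    moreover have "{..<t} \<times> UNIV \<subseteq> {..<s} \<times> (UNIV :: 'v set)"
      using \<open>t \<le> s\<close> by auto
    ultimately show "mvars g \<subseteq> {..<s} \<times> UNIV"
      using S(1) D(1) mvars_mult[of h D] by blast
  next
    show "\<exists>a. \<exists>h\<in>(\<lambda>h. h * D) ` S. peval h (case_prod a) \<noteq> 0"
      using h(1) y by (intro exI[of _ "curry y"]) (auto simp: peval_mult)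
    show "\<forall>a. (\<exists>h\<in>(\<lambda>h. h * D) ` S. peval h (case_prod a) \<noteq> 0) \<longrightarrow> Q a"
      using S(3) PQ by (auto simp: peval_mult)
  qed
qed

lemma ex_generic_configuration_poly:
  fixes mo :: "nat \<Rightarrow> ('v::finite \<Rightarrow>\<^sub>0 nat)"
  assumes "inj_on mo {0..<t}" "t \<le> s"
  obtains D :: "(nat \<times> 'v, 'k::field_char_0) mpoly" and x
  where "mvars D \<subseteq> {..<s} \<times> UNIV" "peval D x \<noteq> 0"
    "\<And>a. peval D (case_prod a) \<noteq> 0 \<Longrightarrow> det (eval_mat t mo a) \<noteq> 0 \<and> (\<forall>i<s. a i v \<noteq> 0)"
proof -
  define Z :: "(nat \<times> 'v, 'k) mpoly" where "Z = (\<Prod>i<s. mvar (i, v))"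
  define D where "D = det_poly t mo * Z"
  have "mvars Z \<subseteq> {..<s} \<times> UNIV"
    using mvars_prod[of "\<lambda>i. mvar (i, v)" "{..<s}"] by (auto simp: Z_def mvars_mvar)
  moreover have "mvars (det_poly t mo :: (nat \<times> 'v, 'k) mpoly) \<subseteq> {..<s} \<times> UNIV"
    using mvars_det_poly[of t mo] assms(2) by auto
  ultimately have "mvars D \<subseteq> {..<s} \<times> UNIV"
    using mvars_mult[of "det_poly t mo" Z] by (auto simp: D_def)
  moreover obtain x where "peval D x \<noteq> 0"
  proof -
    obtain y where "peval (det_poly t mo :: (nat \<times> 'v, 'k) mpoly) y \<noteq> 0"
      using ex_peval_nonzero[OF infinite_UNIV_char_0 det_poly_nonzero[OF assms(1)]] by blast
    moreover have "peval Z (\<lambda>_. 1) \<noteq> 0"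
      by (simp add: Z_def peval_prod)
    ultimately show ?thesis
      using ex_common_nonroot[OF infinite_UNIV_char_0] that by (fastforce simp: D_def peval_mult)
  qed
  moreover have "det (eval_mat t mo a) \<noteq> 0 \<and> (\<forall>i<s. a i v \<noteq> 0)"
    if "peval D (case_prod a) \<noteq> 0" for a
    using that by (simp add: D_def Z_def peval_mult peval_det_poly peval_prod)
  ultimately show ?thesis using that by blast
qed

section \<open>From t to s points\<close>

lemma alpha_le: "p \<in> J \<Longrightarrow> p \<noteq> 0 \<Longrightarrow> homogeneous e p \<Longrightarrow> alpha J \<le> e"
  unfolding alpha_def by (rule Least_le) blast

lemma alpha_attained:
  assumes "p \<in> J" "p \<noteq> 0" "homogeneous e p"
  shows "\<exists>p\<in>J. p \<noteq> 0 \<and> homogeneous (alpha J) p"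
  unfolding alpha_def by (rule LeastI[of _ e]) (use assms in blast)

lemma alpha_antimono:
  assumes "J \<subseteq> J'" "p \<in> J" "p \<noteq> 0" "homogeneous e p"
  shows "alpha J' \<le> alpha J"
  using alpha_attained[OF assms(2-)] assms(1) alpha_le by blast

lemma binomial_ge_Suc:
  assumes "0 < k"
  shows "n + 1 \<le> (n + k) choose k"
proof (induction n)
  case (Suc n)
  obtain j where k: "k = Suc j" using assms by (cases k) auto
  have "1 \<le> (n + k) choose j" using k by (simp add: Suc_le_eq)
  then show ?case using Suc by (simp add: k)
qed simp

lemma ex_binomial_bracket:
  assumes "0 < k" "1 \<le> s"
  shows "\<exists>d. (d + k) choose k \<le> s \<and> s < (Suc d + k) choose k"
proof -
  have "s < (Suc s + k) choose k" using binomial_ge_Suc[OF assms(1), of "Suc s"] by simp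
  then obtain e where e: "\<forall>i<e. \<not> s < (i + k) choose k" "s < (e + k) choose k"
    using ex_least_nat_le[of "\<lambda>e. s < (e + k) choose k"] by blast
  moreover obtain d where "e = Suc d"
    using e(2) assms(2) by (cases e) auto
  ultimately show ?thesis
    using not_less by blast
qed

lemma vanishing_form_degree_gt:
  fixes a :: "nat \<Rightarrow> 'v::finite \<Rightarrow> 'k::field_char_0"
  assumes bij: "bij_betw mo {0..<t} (monoms_of_degree d)" and det: "det (eval_mat t mo a) \<noteq> 0"
    and p: "p \<noteq> 0" "homogeneous e p" and van: "\<forall>i<t. peval p (a i) = 0"
  shows "d < e"
proof (rule ccontr)
  assume "\<not> d < e"
  fix v :: 'v
  define r where "r = p * mvar v ^ (d - e)"
  have "homogeneous (e + (d - e) * 1) r"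
    unfolding r_def by (intro homogeneous_mult p(2) homogeneous_power homogeneous_mvar)
  then have "homogeneous d r"
    using \<open>\<not> d < e\<close> by simp
  moreover have "\<forall>i<t. peval r (a i) = 0"
    using van by (simp add: r_def peval_mult)
  ultimately have "r = 0"
    by (rule homogeneous_vanishing_eq_0[OF bij det])
  obtain x where "peval p x \<noteq> 0"
    using ex_peval_nonzero[OF infinite_UNIV_char_0 p(1)] by blast
  then obtain y where "peval p y \<noteq> 0" "peval (mvar v ^ (d - e)) y \<noteq> 0"
    using ex_common_nonroot[OF infinite_UNIV_char_0, of p x "mvar v ^ (d - e)" "\<lambda>_. 1"]
    by (auto simp: peval_power)
  then have "peval r y \<noteq> 0"
    by (simp add: r_def peval_mult)
  with \<open>r = 0\<close> show False
    by simp
qed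

lemma alpha_points_ideal_eq:
  fixes a :: "nat \<Rightarrow> 'v::finite \<Rightarrow> 'k::field_char_0"
  assumes bij: "bij_betw mo {0..<t} (monoms_of_degree d)" and det: "det (eval_mat t mo a) \<noteq> 0"
    and "t \<le> u" and q: "q \<in> points_ideal a u" "q \<noteq> 0" "homogeneous (Suc d) q"
  shows "alpha (points_ideal a u) = Suc d"
proof (rule antisym)
  show "alpha (points_ideal a u) \<le> Suc d"
    using q by (rule alpha_le)
  obtain p where p: "p \<in> points_ideal a u" "p \<noteq> 0" "homogeneous (alpha (points_ideal a u)) p"
    using alpha_attained[OF q] by blast
  then have "\<forall>i<t. peval p (a i) = 0"
    using \<open>t \<le> u\<close> by (auto simp: points_ideal_def peval_point_ideal)
  then show "Suc d \<le> alpha (points_ideal a u)"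
    using vanishing_form_degree_gt[OF bij det p(2,3)] by simp
qed

lemma waldschmidt_prop_extend:
  fixes a :: "nat \<Rightarrow> 'v::finite \<Rightarrow> 'k::field_char_0"
  assumes bij: "bij_betw mo {0..<t} (monoms_of_degree d)" and det: "det (eval_mat t mo a) \<noteq> 0"
    and "t \<le> s" and s: "s < card (monoms_of_degree (Suc d) :: ('v \<Rightarrow>\<^sub>0 nat) set)"
    and nz: "\<forall>i<s. a i v \<noteq> 0" and W: "waldschmidt_prop f a t"
  shows "waldschmidt_prop f a s"
proof -
  obtain q where q: "q \<noteq> 0" "homogeneous (Suc d) q" "\<forall>i<s. peval q (a i) = 0"
    using ex_homogeneous_vanishing[OF s] by blast
  have q_mem: "q \<in> point_ideal (a i)" if "i < s" for i
    using homogeneous_vanishing_mem_point_ideal[of "a i" v] nz q that by blast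
  have alpha_eq: "alpha (points_ideal a s) = alpha (points_ideal a t)"
    using alpha_points_ideal_eq[OF bij det, of s q] alpha_points_ideal_eq[OF bij det, of t q]
      q_mem q(1,2) \<open>t \<le> s\<close>
    by (auto simp: points_ideal_def)
  have alpha_symbolic_le: "alpha (symbolic_power a t m) \<le> alpha (symbolic_power a s m)" for m
  proof (rule alpha_antimono)
    show "symbolic_power a s m \<subseteq> symbolic_power a t m"
      using \<open>t \<le> s\<close> by (auto simp: symbolic_power_def)
    show "q ^ m \<in> symbolic_power a s m"
      using q_mem by (simp add: symbolic_power_def power_mem_ideal_pow)
    obtain x where "peval q x \<noteq> 0"
      using ex_peval_nonzero[OF infinite_UNIV_char_0 q(1)] by blast
    then show "q ^ m \<noteq> 0"
      by (metis peval_power peval_zero power_not_zero)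
    show "homogeneous (m * Suc d) (q ^ m)"
      using homogeneous_power[OF q(2)] .
  qed
  show ?thesis
    unfolding waldschmidt_prop_def
  proof (intro allI impI)
    fix m :: nat assume "1 \<le> m"
    then have "f (alpha (points_ideal a s)) \<le> of_nat (alpha (symbolic_power a t m)) / of_nat m"
      using W alpha_eq by (simp add: waldschmidt_prop_def)
    also have "\<dots> \<le> of_nat (alpha (symbolic_power a s m)) / of_nat m"
      using alpha_symbolic_le[of m] by (simp add: divide_right_mono)
    finally show "f (alpha (points_ideal a s)) \<le> of_nat (alpha (symbolic_power a s m)) / of_nat m" .
  qed
qed

theorem lemma5p6:
  fixes f :: "nat \<Rightarrow> rat"
  assumes N: "card (UNIV :: 'v::finite set) \<ge> 3"
  assumes H: "\<forall>d. general_points ((d + (card (UNIV :: 'v set) - 1)) choose (card (UNIV :: 'v set) - 1))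
                  (\<lambda>a :: nat \<Rightarrow> 'v \<Rightarrow> 'k::field_char_0.
                     waldschmidt_prop f a ((d + (card (UNIV :: 'v set) - 1)) choose (card (UNIV :: 'v set) - 1)))"
  shows "\<forall>s\<ge>1. general_points s (\<lambda>a :: nat \<Rightarrow> 'v \<Rightarrow> 'k. waldschmidt_prop f a s)"
proof (intro allI impI)
  fix s :: nat assume "s \<ge> 1"
  let ?N = "card (UNIV :: 'v set) - 1"
  obtain d where d: "(d + ?N) choose ?N \<le> s" "s < (Suc d + ?N) choose ?N"
    using ex_binomial_bracket[of ?N s] N \<open>s \<ge> 1\<close> by auto
  define t where "t = (d + ?N) choose ?N"
  obtain mo where bij: "bij_betw mo {0..<t} (monoms_of_degree d :: ('v \<Rightarrow>\<^sub>0 nat) set)"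
    using ex_bij_betw_nat_finite[OF finite_monoms_of_degree] by (auto simp: card_monoms_of_degree t_def)
  fix v :: 'v
  obtain D :: "(nat \<times> 'v, 'k) mpoly" and x where D: "mvars D \<subseteq> {..<s} \<times> UNIV" "peval D x \<noteq> 0"
    "\<And>a. peval D (case_prod a) \<noteq> 0 \<Longrightarrow> det (eval_mat t mo a) \<noteq> 0 \<and> (\<forall>i<s. a i v \<noteq> 0)"
    using ex_generic_configuration_poly[of mo t s v] bij d(1) by (auto simp: t_def bij_betw_def)
  have "general_points t (\<lambda>a :: nat \<Rightarrow> 'v \<Rightarrow> 'k. waldschmidt_prop f a t)"
    using H by (simp add: t_def)
  then show "general_points s (\<lambda>a :: nat \<Rightarrow> 'v \<Rightarrow> 'k. waldschmidt_prop f a s)"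
  proof (rule general_points_refine[OF infinite_UNIV_char_0 _ _ D(1,2)])
    show "t \<le> s"
      using d(1) by (simp add: t_def)
    fix a assume "waldschmidt_prop f a t" "peval D (case_prod a) \<noteq> 0"
    with D(3) d show "waldschmidt_prop f a s"
      using waldschmidt_prop_extend[OF bij, of a s v f] by (simp add: card_monoms_of_degree t_def)
  qed
qed

end
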